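(* Assume (a) and (b). Then the minimizer of the optimization problem $$\min_{\beta\in\mathbb{R}}\;\lambda\int f^{*}\!\Big(-\frac{\beta+L_z(\theta)}{\lambda}\Big)\,dQ(\theta)+\beta$$ is $N_{Q,z}(\lambda)$.
   Context: Setting. - $\mathcal{M}\subseteq\mathbb{R}^d$; $h:\mathcal{M}\times\mathcal{X}\to\mathcal{Y}$; the loss $\ell:\mathcal{Y}\times\mathcal{Y}\to[0,\infty)$ satisfies $\ell(y,y)=0$. - For a dataset $z=((x_1,y_1),\dots,(x_n,y_n))$, $L_z(\theta)=\frac1n\sum_i\ell(h(\theta,x_i),y_i)$. - $Q$ is a Borel probability measure on $\mathcal{M}$, and $\lambda>0$. - $f:[0,\infty)\to\mathbb{R}$ is convex with $f(1)=0$ and $f(0)=\lim_{x\to0^+}f(x)$. - $\dot f$ is the derivative of $f$ on $(0,\infty)$ and $\dot f^{-1}$ its inverse function. Legendre–Fenchel transform. $f^*(t)=\sup_{x}(tx-f(x))$ (supremum over the domain of $f$), defined on $\mathcal{J}=\{t\in\mathbb{R}:f^*(t)<\infty\}$. Assumptions. - (a) $f$ is strictly convex and differentiable. - (b) There exists $\beta\in\mathbb{R}$ such that $\dot f^{-1}\big(-\frac{\beta+L_z(\theta)}{\lambda}\big)>0$ for all $\theta\in\operatorname{supp}Q$ and $\int\dot f^{-1}\big(-\frac{\beta+L_z(\theta)}{\lambda}\big)dQ(\theta)=1$. Normalization function. Let $\mathcal{A}_{Q,z}\subseteq(0,\infty)$ be the set of $\lambda$ for which (b) holds. The normalization function $N_{Q,z}:\mathcal{A}_{Q,z}\to\mathbb{R}$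 is defined by $$\int\dot f^{-1}\Big(-\frac{N_{Q,z}(\lambda)+L_z(\theta)}{\lambda}\Big)dQ(\theta)=1.$$ That is, $N_{Q,z}(\lambda)$ is the value $\beta$ of assumption (b). *)

theory Defs
  imports "HOL-Analysis.Analysis" "HOL-Probability.Probability"
begin

definition emp_risk :: "('y \<Rightarrow> 'y \<Rightarrow> real) \<Rightarrow> ('a \<Rightarrow> 'x \<Rightarrow> 'y) \<Rightarrow> ('x \<times> 'y) list \<Rightarrow> 'a \<Rightarrow> real" where
  "emp_risk loss h z \<theta> = (1 / real (length z)) * (\<Sum>i<length z. loss (h \<theta> (fst (z ! i))) (snd (z ! i)))"

definition strictly_convex_on :: "real set \<Rightarrow> (real \<Rightarrow> real) \<Rightarrow> bool" where
  "strictly_convex_on S f \<longleftrightarrow>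
     (\<forall>x\<in>S. \<forall>y\<in>S. x \<noteq> y \<longrightarrow> (\<forall>u. 0 < u \<and> u < 1 \<longrightarrow>
        f (u * x + (1 - u) * y) < u * f x + (1 - u) * f y))"

definition fdot :: "(real \<Rightarrow> real) \<Rightarrow> real \<Rightarrow> real" where
  "fdot f = deriv f"

definition fdot_inv :: "(real \<Rightarrow> real) \<Rightarrow> real \<Rightarrow> real" where
  "fdot_inv f = inv_into {0<..} (fdot f)"

definition fstar :: "(real \<Rightarrow> real) \<Rightarrow> real \<Rightarrow> ereal" where
  "fstar f t = (SUP x\<in>{0..}. ereal (t * x - f x))"

definition supp :: "'a::metric_space measure \<Rightarrow> 'a set" where
  "supp Q = {\<theta> \<in> space Q. \<forall>e>0. emeasure Q (ball \<theta> e \<inter> space Q) > 0}"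

definition assm_b ::
  "(real \<Rightarrow> real) \<Rightarrow> ('y \<Rightarrow> 'y \<Rightarrow> real) \<Rightarrow> ('a::metric_space \<Rightarrow> 'x \<Rightarrow> 'y) \<Rightarrow> ('x \<times> 'y) list
     \<Rightarrow> 'a measure \<Rightarrow> real \<Rightarrow> real \<Rightarrow> bool" where
  "assm_b f loss h z Q lam \<beta> \<longleftrightarrow>
     (\<forall>\<theta>\<in>supp Q. - (\<beta> + emp_risk loss h z \<theta>) / lam \<in> fdot f ` {0<..}
                 \<and> fdot_inv f (- (\<beta> + emp_risk loss h z \<theta>) / lam) > 0)
   \<and> integrable Q (\<lambda>\<theta>. fdot_inv f (- (\<beta> + emp_risk loss h z \<theta>) / lam))
   \<and> (\<integral>\<theta>. fdot_inv f (- (\<beta> + emp_risk loss h z \<theta>) / lam) \<partial>Q) = 1"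

definition adm_set ::
  "(real \<Rightarrow> real) \<Rightarrow> ('y \<Rightarrow> 'y \<Rightarrow> real) \<Rightarrow> ('a::metric_space \<Rightarrow> 'x \<Rightarrow> 'y) \<Rightarrow> ('x \<times> 'y) list
     \<Rightarrow> 'a measure \<Rightarrow> real set" where
  "adm_set f loss h z Q = {lam. 0 < lam \<and> (\<exists>\<beta>. assm_b f loss h z Q lam \<beta>)}"

definition norm_fun ::
  "(real \<Rightarrow> real) \<Rightarrow> ('y \<Rightarrow> 'y \<Rightarrow> real) \<Rightarrow> ('a::metric_space \<Rightarrow> 'x \<Rightarrow> 'y) \<Rightarrow> ('x \<times> 'y) list
     \<Rightarrow> 'a measure \<Rightarrow> real \<Rightarrow> real" where
  "norm_fun f loss h z Q lam = (THE \<beta>. assm_b f loss h z Q lam \<beta>)"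

text \<open>Since f^* \<ge> -f(0), the integral is taken as the (always defined) nonnegative integral of
  f^* + f(0), minus f(0) (Q is a probability measure).\<close>
definition objective ::
  "(real \<Rightarrow> real) \<Rightarrow> ('y \<Rightarrow> 'y \<Rightarrow> real) \<Rightarrow> ('a \<Rightarrow> 'x \<Rightarrow> 'y) \<Rightarrow> ('x \<times> 'y) list
     \<Rightarrow> 'a measure \<Rightarrow> real \<Rightarrow> real \<Rightarrow> ereal" where
  "objective f loss h z Q lam \<beta> =
     ereal lam * (enn2ereal (\<integral>\<^sup>+\<theta>. e2ennreal (fstar f (- (\<beta> + emp_risk loss h z \<theta>) / lam) + ereal (f 0)) \<partial>Q)
                - ereal (f 0)) + ereal \<beta>"

end

theory Submission
  imports Defs
begin

text \<open>
  Put \<open>t = -(N + L)/\<lambda>\<close> and \<open>x = fdot_inv f \<circ> t\<close>, so that \<open>f'(x) = t\<close> on the support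
  of \<open>Q\<close>. The tangent inequality of the convex \<open>f\<close> at \<open>x\<close> gives the Fenchel equality
  \<open>f\<^sup>*(t) = t x - f(x)\<close>, while Fenchel-Young gives \<open>f\<^sup>*(t + c) \<ge> t x - f(x) + c x\<close> for
  every \<open>c\<close>. Integrating and using \<open>\<integral> x dQ = 1\<close> yields
  \<open>\<integral> f\<^sup>*(t + c) dQ \<ge> \<integral> f\<^sup>*(t) dQ + c\<close>, which for \<open>c = (N - \<beta>)/\<lambda>\<close> is the claim.
  Since \<open>L \<ge> 0\<close> bounds \<open>t\<close> above, \<open>f\<^sup>*(t)\<close> is dominated by an affine function of \<open>x\<close>
  and hence integrable.
  \<open>N\<close> is well defined because \<open>fdot_inv f\<close> is strictly increasing: two solutions of (b)
  would give densities that are a.e. strictly ordered yet both integrate to 1.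
\<close>

lemma convex_on_fdot_tangent:
  fixes f :: "real \<Rightarrow> real"
  assumes "convex_on {0..} f" and "f differentiable (at c)" and "0 < c" and "0 \<le> y"
  shows "f c + fdot f c * (y - c) \<le> f y"
proof -
  have "(f has_real_derivative fdot f c) (at c within {0..})"
    using assms(2) unfolding fdot_def
    by (simp add: DERIV_deriv_iff_real_differentiable has_field_derivative_at_within)
  with assms show ?thesis
    using convex_on_imp_above_tangent[of "{0..}" f c] by (force simp: is_interval_connected)
qed

lemma fdot_mono:
  fixes f :: "real \<Rightarrow> real"
  assumes cv: "convex_on {0..} f" and d: "\<And>y. 0 < y \<Longrightarrow> f differentiable (at y)"
    and "0 < x" and "x \<le> y"
  shows "fdot f x \<le> fdot f y"
proof -
  have "f x + fdot f x * (y - x) \<le> f y" "f y + fdot f y * (x - y) \<le> f x"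
    using convex_on_fdot_tangent[OF cv d] assms(3,4) by auto
  then have "0 \<le> (fdot f y - fdot f x) * (y - x)" by (simp add: algebra_simps)
  with \<open>x \<le> y\<close> show ?thesis by (cases "x = y") (auto simp: zero_le_mult_iff)
qed

lemma fdot_inv_pos: "t \<in> fdot f ` {0<..} \<Longrightarrow> 0 < fdot_inv f t"
  unfolding fdot_inv_def using inv_into_into[of t "fdot f" "{0<..}"] by simp

lemma fdot_fdot_inv: "t \<in> fdot f ` {0<..} \<Longrightarrow> fdot f (fdot_inv f t) = t"
  unfolding fdot_inv_def by (rule f_inv_into_f)

lemma fdot_inv_less:
  fixes f :: "real \<Rightarrow> real"
  assumes cv: "convex_on {0..} f" and d: "\<And>y. 0 < y \<Longrightarrow> f differentiable (at y)"
    and s: "s \<in> fdot f ` {0<..}" and t: "t \<in> fdot f ` {0<..}" and "s < t"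
  shows "fdot_inv f s < fdot_inv f t"
proof (rule ccontr)
  assume "\<not> fdot_inv f s < fdot_inv f t"
  then have "fdot f (fdot_inv f t) \<le> fdot f (fdot_inv f s)"
    using fdot_mono[OF cv d] fdot_inv_pos[OF t] by simp
  with \<open>s < t\<close> show False by (simp add: fdot_fdot_inv s t)
qed

lemma fenchel_young: "0 \<le> y \<Longrightarrow> ereal (t * y - f y) \<le> fstar f t"
  unfolding fstar_def by (rule SUP_upper) simp

lemma fstar_fdot:
  fixes f :: "real \<Rightarrow> real"
  assumes cv: "convex_on {0..} f" and d: "\<And>y. 0 < y \<Longrightarrow> f differentiable (at y)" and "0 < x"
  shows "fstar f (fdot f x) = ereal (fdot f x * x - f x)"
proof (rule antisym)
  show "fstar f (fdot f x) \<le> ereal (fdot f x * x - f x)"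
    unfolding fstar_def
  proof (rule SUP_least)
    fix y :: real assume "y \<in> {0..}"
    then have "f x + fdot f x * (y - x) \<le> f y"
      using convex_on_fdot_tangent[OF cv d] \<open>0 < x\<close> by simp
    then show "ereal (fdot f x * y - f y) \<le> ereal (fdot f x * x - f x)"
      by (simp add: algebra_simps)
  qed
  show "ereal (fdot f x * x - f x) \<le> fstar f (fdot f x)"
    using \<open>0 < x\<close> by (intro fenchel_young) simp
qed

lemma fenchel_value_bounds:
  fixes f :: "real \<Rightarrow> real"
  assumes cv: "convex_on {0..} f" and d: "\<And>y. 0 < y \<Longrightarrow> f differentiable (at y)"
    and "0 < x" and "fdot f x \<le> s"
  shows "0 \<le> fdot f x * x - f x + f 0"
    and "fdot f x * x - f x + f 0 \<le> (s - fdot f 1) * x + fdot f 1 - f 1 + f 0"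
proof -
  have "f x + fdot f x * (0 - x) \<le> f 0" "f 1 + fdot f 1 * (x - 1) \<le> f x"
    using convex_on_fdot_tangent[OF cv d, of x 0] convex_on_fdot_tangent[OF cv d, of 1 x] \<open>0 < x\<close>
    by auto
  moreover have "fdot f x * x \<le> s * x"
    using \<open>0 < x\<close> \<open>fdot f x \<le> s\<close> by (simp add: mult_right_mono)
  ultimately show "0 \<le> fdot f x * x - f x + f 0"
    and "fdot f x * x - f x + f 0 \<le> (s - fdot f 1) * x + fdot f 1 - f 1 + f 0"
    by (simp_all add: algebra_simps)
qed

lemma AE_in_supp:
  fixes Q :: "'a::{metric_space, second_countable_topology} measure"
  assumes sQ: "sets Q = sets (restrict_space borel M)"
  shows "AE \<theta> in Q. \<theta> \<in> supp Q"
proof -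
  have space_Q: "space Q = M"
    using sets_eq_imp_space_eq[OF sQ] by (simp add: space_restrict_space)
  have open_meas: "C \<inter> M \<in> sets Q" if "open C" for C
    using that unfolding sQ sets_restrict_space by auto
  obtain B :: "'a set set" where "countable B" and B_open: "\<And>C. C \<in> B \<Longrightarrow> open C"
    and B_basis: "\<And>S. open S \<Longrightarrow> \<exists>U. U \<subseteq> B \<and> S = \<Union>U"
    using univ_second_countable by blast
  let ?null = "{C \<in> B. emeasure Q (C \<inter> M) = 0}"
  have "(\<Union>C\<in>?null. C \<inter> M) \<in> null_sets Q"
    using \<open>countable B\<close> B_open open_meas by (intro null_sets_UN') auto
  then show ?thesis
  proof (rule AE_I', safe)
    fix \<theta> assume "\<theta> \<in> space Q" "\<theta> \<notin> supp Q"
    then obtain e where "0 < e" and ball_null: "emeasure Q (ball \<theta> e \<inter> M) = 0"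
      unfolding supp_def space_Q by (auto simp: not_gr_zero)
    obtain U where "U \<subseteq> B" "ball \<theta> e = \<Union>U" using B_basis[of "ball \<theta> e"] by auto
    with \<open>0 < e\<close> obtain C where "C \<in> B" "\<theta> \<in> C" "C \<subseteq> ball \<theta> e"
      by (metis UnionE Union_upper centre_in_ball subsetD)
    then have "emeasure Q (C \<inter> M) \<le> emeasure Q (ball \<theta> e \<inter> M)"
      using B_open by (intro emeasure_mono open_meas) auto
    with ball_null \<open>C \<in> B\<close> \<open>\<theta> \<in> C\<close> \<open>\<theta> \<in> space Q\<close> space_Q
    show "\<theta> \<in> (\<Union>C\<in>?null. C \<inter> M)" by auto
  qed
qed

lemma borel_measurable_comp_on_pos:
  fixes f :: "real \<Rightarrow> real"
  assumes "continuous_on {0<..} f" and "x \<in> borel_measurable M"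
  shows "(\<lambda>\<theta>. if 0 < x \<theta> then f (x \<theta>) else 0) \<in> borel_measurable M"
  using measurable_compose[OF assms(2) borel_measurable_continuous_on_if[of "{0<..}" f "\<lambda>_. 0"]]
    assms(1) by simp

lemma ereal_integral_le_nn_integral:
  fixes g :: "'a \<Rightarrow> real" and u :: "'a \<Rightarrow> ereal"
  assumes "integrable M g" and "AE \<theta> in M. ereal (g \<theta>) \<le> u \<theta>"
  shows "ereal (integral\<^sup>L M g) \<le> enn2ereal (\<integral>\<^sup>+\<theta>. e2ennreal (u \<theta>) \<partial>M)"
proof -
  let ?r = "integral\<^sup>L M (\<lambda>\<theta>. max 0 (g \<theta>))"
  have "ennreal ?r = (\<integral>\<^sup>+\<theta>. ennreal (max 0 (g \<theta>)) \<partial>M)"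
    using assms(1) by (intro nn_integral_eq_integral[symmetric]) auto
  also have "\<dots> = (\<integral>\<^sup>+\<theta>. ennreal (g \<theta>) \<partial>M)"
    by (simp add: ennreal_max_0)
  also have "\<dots> \<le> (\<integral>\<^sup>+\<theta>. e2ennreal (u \<theta>) \<partial>M)"
    using assms(2) by (intro nn_integral_mono_AE) (auto elim!: eventually_mono dest: e2ennreal_mono)
  finally have "ereal ?r \<le> enn2ereal (\<integral>\<^sup>+\<theta>. e2ennreal (u \<theta>) \<partial>M)"
    by (simp add: less_eq_ennreal.rep_eq)
  moreover have "integral\<^sup>L M g \<le> ?r"
    using assms(1) by (intro integral_mono) auto
  ultimately show ?thesis by (meson ereal_less_eq(3) order_trans)
qed

definition fstar_integral :: "(real \<Rightarrow> real) \<Rightarrow> 'a measure \<Rightarrow> ('a \<Rightarrow> real) \<Rightarrow> ereal" where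
  "fstar_integral f Q t = enn2ereal (\<integral>\<^sup>+\<theta>. e2ennreal (fstar f (t \<theta>) + ereal (f 0)) \<partial>Q) - ereal (f 0)"

lemma objective_eq_fstar_integral:
  "objective f loss h z Q lam \<beta>
     = ereal lam * fstar_integral f Q (\<lambda>\<theta>. - (\<beta> + emp_risk loss h z \<theta>) / lam) + ereal \<beta>"
  unfolding objective_def fstar_integral_def ..

lemma integrable_fenchel_value:
  fixes f :: "real \<Rightarrow> real" and t x :: "'a \<Rightarrow> real"
  assumes Q: "prob_space Q"
    and cv: "convex_on {0..} f" and d: "\<And>y. 0 < y \<Longrightarrow> f differentiable (at y)"
    and t_meas: "t \<in> borel_measurable Q" and t_bdd: "\<And>\<theta>. t \<theta> \<le> s"
    and x_int: "integrable Q x" and x_opt: "AE \<theta> in Q. 0 < x \<theta> \<and> fdot f (x \<theta>) = t \<theta>"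
  shows "integrable Q (\<lambda>\<theta>. t \<theta> * x \<theta> - (if 0 < x \<theta> then f (x \<theta>) else 0) + f 0)"
proof (rule Bochner_Integration.integrable_bound)
  have "continuous_on {0<..} f"
    by (intro continuous_at_imp_continuous_on ballI differentiable_imp_continuous_within d) auto
  then show "(\<lambda>\<theta>. t \<theta> * x \<theta> - (if 0 < x \<theta> then f (x \<theta>) else 0) + f 0) \<in> borel_measurable Q"
    using borel_measurable_comp_on_pos x_int t_meas
    by (intro borel_measurable_add borel_measurable_diff borel_measurable_times) auto
  show "integrable Q (\<lambda>\<theta>. (s - fdot f 1) * x \<theta> + fdot f 1 - f 1 + f 0)"
    using x_int prob_space.finite_measure[OF Q] by (auto simp: finite_measure.integrable_const)
  show "AE \<theta> in Q. norm (t \<theta> * x \<theta> - (if 0 < x \<theta> then f (x \<theta>) else 0) + f 0)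
      \<le> norm ((s - fdot f 1) * x \<theta> + fdot f 1 - f 1 + f 0)"
    using x_opt
  proof eventually_elim
    case (elim \<theta>)
    with fenchel_value_bounds[OF cv d, of "x \<theta>" s] t_bdd[of \<theta>] show ?case by auto
  qed
qed

lemma fstar_integral_shift_ge:
  fixes f :: "real \<Rightarrow> real" and t x :: "'a \<Rightarrow> real"
  assumes Q: "prob_space Q"
    and cv: "convex_on {0..} f" and d: "\<And>y. 0 < y \<Longrightarrow> f differentiable (at y)"
    and t_meas: "t \<in> borel_measurable Q" and t_bdd: "\<And>\<theta>. t \<theta> \<le> s"
    and x_int: "integrable Q x" and x_one: "integral\<^sup>L Q x = 1"
    and x_opt: "AE \<theta> in Q. 0 < x \<theta> \<and> fdot f (x \<theta>) = t \<theta>"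
  shows "fstar_integral f Q t + ereal c \<le> fstar_integral f Q (\<lambda>\<theta>. t \<theta> + c)"
proof -
  \<comment> \<open>the guard only serves measurability; off a null set \<open>0 < x \<theta>\<close>\<close>
  define G where "G \<theta> = t \<theta> * x \<theta> - (if 0 < x \<theta> then f (x \<theta>) else 0) + f 0" for \<theta>
  have G_int: "integrable Q G"
    unfolding G_def using integrable_fenchel_value[OF Q cv d t_meas t_bdd x_int x_opt] .
  have G_fstar: "AE \<theta> in Q. ereal (G \<theta>) = fstar f (t \<theta>) + ereal (f 0) \<and> 0 \<le> G \<theta>"
    using x_opt
  proof eventually_elim
    case (elim \<theta>)
    with fstar_fdot[OF cv d, of "x \<theta>"] fenchel_value_bounds(1)[OF cv d, of "x \<theta>" "t \<theta>"]
    show ?case by (simp add: G_def)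
  qed
  have "(\<integral>\<^sup>+\<theta>. e2ennreal (fstar f (t \<theta>) + ereal (f 0)) \<partial>Q) = (\<integral>\<^sup>+\<theta>. ennreal (G \<theta>) \<partial>Q)"
    using G_fstar by (intro nn_integral_cong_AE) (auto elim!: eventually_mono simp flip: e2ennreal_ereal)
  also have "\<dots> = ennreal (integral\<^sup>L Q G)"
    using G_int G_fstar by (intro nn_integral_eq_integral) auto
  finally have "fstar_integral f Q t + ereal c = ereal (integral\<^sup>L Q (\<lambda>\<theta>. G \<theta> + c * x \<theta>)) - ereal (f 0)"
    unfolding fstar_integral_def using G_int x_int x_one G_fstar
    by (simp add: integral_nonneg_AE)
  also have "\<dots> \<le> fstar_integral f Q (\<lambda>\<theta>. t \<theta> + c)"
    unfolding fstar_integral_def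
  proof (intro ereal_minus_mono order_refl ereal_integral_le_nn_integral)
    show "integrable Q (\<lambda>\<theta>. G \<theta> + c * x \<theta>)" using G_int x_int by simp
    show "AE \<theta> in Q. ereal (G \<theta> + c * x \<theta>) \<le> fstar f (t \<theta> + c) + ereal (f 0)"
      using x_opt
    proof eventually_elim
      case (elim \<theta>)
      then have "ereal ((t \<theta> + c) * x \<theta> - f (x \<theta>)) \<le> fstar f (t \<theta> + c)"
        by (intro fenchel_young) simp
      with elim show ?case
        by (cases "fstar f (t \<theta> + c)") (auto simp: G_def algebra_simps)
    qed
  qed
  finally show ?thesis .
qed

lemma emp_risk_nonneg: "(\<And>y y'. 0 \<le> loss y y') \<Longrightarrow> 0 \<le> emp_risk loss h z \<theta>"
  unfolding emp_risk_def by (simp add: sum_nonneg)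

lemma assm_b_unique:
  fixes Q :: "'a::{metric_space, second_countable_topology} measure"
  assumes Q: "prob_space Q" and sQ: "sets Q = sets (restrict_space borel M)"
    and cv: "convex_on {0..} f" and d: "\<And>y. 0 < y \<Longrightarrow> f differentiable (at y)"
    and "0 < lam" and "assm_b f loss h z Q lam b1" and "assm_b f loss h z Q lam b2"
  shows "b1 = b2"
proof -
  have "\<not> b < b'" if b: "assm_b f loss h z Q lam b" and b': "assm_b f loss h z Q lam b'" for b b'
  proof
    assume "b < b'"
    let ?x = "\<lambda>b \<theta>. fdot_inv f (- (b + emp_risk loss h z \<theta>) / lam)"
    have "AE \<theta> in Q. ?x b' \<theta> < ?x b \<theta>"
      using AE_in_supp[OF sQ]
    proof eventually_elim
      case (elim \<theta>)
      have "- (b' + emp_risk loss h z \<theta>) / lam < - (b + emp_risk loss h z \<theta>) / lam"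
        using \<open>b < b'\<close> \<open>0 < lam\<close> by (simp add: divide_strict_right_mono)
      with elim b b' show ?case by (intro fdot_inv_less[OF cv d]) (auto simp: assm_b_def)
    qed
    then have "integral\<^sup>L Q (?x b') < integral\<^sup>L Q (?x b)"
      using b b' Q by (intro finite_measure.integral_less_AE_space)
        (auto simp: assm_b_def prob_space.finite_measure prob_space.emeasure_space_1)
    with b b' show False by (simp add: assm_b_def)
  qed
  with assms show ?thesis by (meson linorder_neqE)
qed

lemma norm_fun_eqI:
  fixes Q :: "'a::{metric_space, second_countable_topology} measure"
  assumes "prob_space Q" and "sets Q = sets (restrict_space borel M)"
    and "convex_on {0..} f" and "\<And>y. 0 < y \<Longrightarrow> f differentiable (at y)"
    and "0 < lam" and "assm_b f loss h z Q lam b"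
  shows "norm_fun f loss h z Q lam = b"
  unfolding norm_fun_def using assms by (blast intro: the_equality assm_b_unique)

lemma objective_minimal_at_assm_b:
  fixes Q :: "'a::{metric_space, second_countable_topology} measure"
  assumes loss_nonneg: "\<And>y y'. 0 \<le> loss y y'"
    and Q_prob: "prob_space Q" and Q_borel: "sets Q = sets (restrict_space borel M)"
    and L_meas: "emp_risk loss h z \<in> borel_measurable Q" and lam_pos: "0 < lam"
    and cv: "convex_on {0..} f" and d: "\<And>y. 0 < y \<Longrightarrow> f differentiable (at y)"
    and N: "assm_b f loss h z Q lam N"
  shows "objective f loss h z Q lam N \<le> objective f loss h z Q lam \<beta>"
proof -
  let ?L = "emp_risk loss h z"
  define t where "t \<theta> = - (N + ?L \<theta>) / lam" for \<theta>
  define c where "c = (N - \<beta>) / lam"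
  have "fstar_integral f Q t + ereal c \<le> fstar_integral f Q (\<lambda>\<theta>. t \<theta> + c)"
  proof (rule fstar_integral_shift_ge[OF Q_prob cv d])
    show "t \<in> borel_measurable Q" using L_meas unfolding t_def by measurable
    show "t \<theta> \<le> - N / lam" for \<theta>
      using emp_risk_nonneg[of loss h z \<theta>] loss_nonneg lam_pos by (simp add: t_def field_simps)
    show "integrable Q (\<lambda>\<theta>. fdot_inv f (t \<theta>))" "integral\<^sup>L Q (\<lambda>\<theta>. fdot_inv f (t \<theta>)) = 1"
      using N by (auto simp: assm_b_def t_def)
    show "AE \<theta> in Q. 0 < fdot_inv f (t \<theta>) \<and> fdot f (fdot_inv f (t \<theta>)) = t \<theta>"
      using AE_in_supp[OF Q_borel]
      by eventually_elim (use N in \<open>auto simp: assm_b_def t_def fdot_inv_pos fdot_fdot_inv\<close>)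
  qed
  moreover have "(\<lambda>\<theta>. t \<theta> + c) = (\<lambda>\<theta>. - (\<beta> + ?L \<theta>) / lam)"
    using lam_pos by (auto simp: t_def c_def field_simps)
  ultimately have "ereal lam * (fstar_integral f Q t + ereal c) + ereal \<beta> \<le> objective f loss h z Q lam \<beta>"
    unfolding objective_eq_fstar_integral using lam_pos
    by (intro add_right_mono ereal_mult_left_mono) auto
  moreover have "ereal lam * (fstar_integral f Q t + ereal c) + ereal \<beta> = objective f loss h z Q lam N"
    unfolding objective_eq_fstar_integral t_def c_def using lam_pos
    by (simp add: ereal_distrib_left add.assoc)
  ultimately show ?thesis by simp
qed

theorem theorem2:
  fixes M :: "'a::euclidean_space set"
    and h :: "'a \<Rightarrow> 'x \<Rightarrow> 'y"
    and loss :: "'y \<Rightarrow> 'y \<Rightarrow> real"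
    and z :: "('x \<times> 'y) list"
    and Q :: "'a measure"
    and f :: "real \<Rightarrow> real"
    and lam :: real
  assumes loss_nonneg: "\<And>y y'. loss y y' \<ge> 0"
    and loss_refl: "\<And>y. loss y y = 0"
    and Q_prob: "prob_space Q"
    and Q_borel: "sets Q = sets (restrict_space borel M)"
    and L_meas: "(\<lambda>\<theta>. emp_risk loss h z \<theta>) \<in> borel_measurable Q"
    and lam_pos: "0 < lam"
    and f_convex: "convex_on {0..} f"
    and f_one: "f 1 = 0"
    and f_zero: "(f \<longlongrightarrow> f 0) (at_right 0)"
    and a_strict: "strictly_convex_on {0..} f"
    and a_diff: "\<And>x. 0 < x \<Longrightarrow> f differentiable (at x)"
    and b: "lam \<in> adm_set f loss h z Q"
  shows "\<forall>\<beta>. objective f loss h z Q lam (norm_fun f loss h z Q lam) \<le> objective f loss h z Q lam \<beta>"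
proof
  fix \<beta>
  obtain N where N: "assm_b f loss h z Q lam N" using b unfolding adm_set_def by auto
  have "norm_fun f loss h z Q lam = N"
    using norm_fun_eqI[OF Q_prob Q_borel f_convex a_diff lam_pos N] .
  with objective_minimal_at_assm_b[OF loss_nonneg Q_prob Q_borel _ lam_pos f_convex a_diff N] L_meas
  show "objective f loss h z Q lam (norm_fun f loss h z Q lam) \<le> objective f loss h z Q lam \<beta>"
    by simp
qed

end
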